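(* Consider an edge-to-edge tiling of a surface in which every corner of every tile carries a positive real number (its angle), such that the angles at every vertex sum to $2\pi$. Suppose the number $k$ of distinct angle values occurring at degree $3$ vertices satisfies $1\le k\le 5$, and let $S$ be the set of angle combinations occurring at degree $3$ vertices. Then, after suitably naming these $k$ distinct values by $\alpha,\beta,\gamma,\delta,\epsilon$ (the first $k$ of these letters), there is a row $(N;O)$ in the following list with exactly $k$ letters such that $N\subseteq S\subseteq N\cup O$: $k=1$: $(\{\alpha^3\};\emptyset)$. $k=2$: $(\{\alpha\beta^2\};\emptyset)$. $k=3$: $(\{\alpha\beta\gamma\};\{\alpha^3\})$; $(\{\alpha\beta^2,\alpha^2\gamma\};\emptyset)$; $(\{\alpha\beta^2,\gamma^3\};\emptyset)$. $k=4$: $(\{\alpha\beta\gamma,\alpha\delta^2\};\{\beta^2\delta\})$; $(\{\alpha\beta\gamma,\alpha\delta^2\};\{\beta^3\})$; $(\{\alpha\beta\gamma,\alpha^2\delta\};\{\beta\delta^2\})$; $(\{\alpha\beta\gamma,\alpha^2\delta\};\{\beta^3\})$; $(\{\alpha\beta\gamma,\delta^3\};\emptyset)$; $(\{\alpha\beta^2,\gamma\delta^2\};\{\alpha^2\delta\})$; $(\{\alpha\beta^2,\alpha^2\gamma,\delta^3\};\emptyset)$. $k=5$: with $N=\{\alpha\beta\gamma,\alpha\delta\epsilon\}$: $O=\{\beta\delta^2,\beta^2\epsilon\}$, $\{\beta\delta^2,\gamma\epsilon^2,\alpha^3\}$, $\{\beta\delta^2,\gamma^2\epsilon\}$, $\{\beta\delta^2,\gamma^3\}$,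 or $\{\beta\delta^2,\epsilon^3\}$; with $N=\{\alpha\beta\gamma,\alpha\delta^2,\alpha^2\epsilon\}$: $O=\{\beta\epsilon^2\}$, $\{\beta^2\delta\}$, or $\{\beta^3\}$; with $N=\{\alpha\beta\gamma,\alpha\delta^2,\beta\epsilon^2\}$: $O=\{\alpha^2\epsilon\}$, $\{\gamma^2\delta\}$, or $\{\gamma^3\}$; with $N=\{\alpha\beta\gamma,\alpha\delta^2,\beta^2\epsilon\}$: $O=\{\gamma\epsilon^2\}$, $\{\gamma^2\delta\}$, or $\{\gamma^3\}$; with $N=\{\alpha\beta\gamma,\alpha\delta^2,\delta\epsilon^2\}$: $O=\{\beta^2\epsilon\}$ or $\{\beta^3\}$; with $N=\{\alpha\beta\gamma,\alpha\delta^2,\epsilon^3\}$: $O=\{\beta^2\delta\}$; with $N=\{\alpha\beta\gamma,\alpha^2\delta,\beta^2\epsilon\}$: $O=\{\alpha\epsilon^2\}$, $\{\gamma\delta^2\}$, or $\{\gamma^3\}$; with $N=\{\alpha\beta\gamma,\alpha^2\delta,\delta^2\epsilon\}$: $O=\{\beta^2\epsilon\}$ or $\{\beta^3\}$; with $N=\{\alpha\beta\gamma,\alpha^2\delta,\epsilon^3\}$: $O=\{\beta\delta^2\}$; with $N=\{\alpha\beta\gamma,\delta\epsilon^2\}$: $O=\{\alpha^3\}$; with $N=\{\alpha\beta^2,\gamma\delta^2,\alpha^2\epsilon\}$: $O=\{\beta\gamma^2\}$ or $\{\delta\epsilon^2\}$; with $N=\{\alpha\beta^2,\gamma\delta^2,\epsilon^3\}$: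 $O=\{\alpha^2\delta\}$.
   Context: An angle combination at a degree $3$ vertex is the multiset of the three angle values at its corners, written multiplicatively: e.g. $\alpha\beta^2$ denotes a degree $3$ vertex whose corners have angles $\alpha,\beta,\beta$, and $\alpha^3$ one whose three corners all have angle $\alpha$. The letters $\alpha,\beta,\gamma,\delta,\epsilon$ denote pairwise distinct real numbers. In each row, $N$ is the "necessary part" and $O$ the "optional part". *)

theory Defs
  imports Complex_Main "HOL-Library.Multiset"
begin

text \<open>Corners of tiles have type 'c; each corner lies at a vertex (vert c) and carries
  an angle (ang c).\<close>

definition corners_at :: "('c \<Rightarrow> 'v) \<Rightarrow> 'v \<Rightarrow> 'c set" where
  "corners_at vert v = {c. vert c = v}"

definition degree :: "('c \<Rightarrow> 'v) \<Rightarrow> 'v \<Rightarrow> nat" where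
  "degree vert v = card (corners_at vert v)"

definition angle_comb :: "('c \<Rightarrow> 'v) \<Rightarrow> ('c \<Rightarrow> real) \<Rightarrow> 'v \<Rightarrow> real multiset" where
  "angle_comb vert ang v = image_mset ang (mset_set (corners_at vert v))"

definition deg3_combos :: "('c \<Rightarrow> 'v) \<Rightarrow> ('c \<Rightarrow> real) \<Rightarrow> real multiset set" where
  "deg3_combos vert ang = angle_comb vert ang ` {v \<in> range vert. degree vert v = 3}"

definition deg3_values :: "('c \<Rightarrow> 'v) \<Rightarrow> ('c \<Rightarrow> real) \<Rightarrow> real set" where
  "deg3_values vert ang = (\<Union>M \<in> deg3_combos vert ang. set_mset M)"

text \<open>Letters alpha, beta, gamma, delta, epsilon are encoded as 0,1,2,3,4.
  A row is (k, N, O): number of letters, necessary part, optional part.\<close>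

abbreviation (input) a3 :: "nat \<Rightarrow> nat \<Rightarrow> nat \<Rightarrow> nat multiset" where
  "a3 x y z \<equiv> {#x, y, z#}"

definition rows :: "(nat \<times> nat multiset set \<times> nat multiset set) list" where
  "rows = [
   (1, {a3 0 0 0}, {}),
   (2, {a3 0 1 1}, {}),
   (3, {a3 0 1 2}, {a3 0 0 0}),
   (3, {a3 0 1 1, a3 0 0 2}, {}),
   (3, {a3 0 1 1, a3 2 2 2}, {}),
   (4, {a3 0 1 2, a3 0 3 3}, {a3 1 1 3}),
   (4, {a3 0 1 2, a3 0 3 3}, {a3 1 1 1}),
   (4, {a3 0 1 2, a3 0 0 3}, {a3 1 3 3}),
   (4, {a3 0 1 2, a3 0 0 3}, {a3 1 1 1}),
   (4, {a3 0 1 2, a3 3 3 3}, {}),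
   (4, {a3 0 1 1, a3 2 3 3}, {a3 0 0 3}),
   (4, {a3 0 1 1, a3 0 0 2, a3 3 3 3}, {}),
   (5, {a3 0 1 2, a3 0 3 4}, {a3 1 3 3, a3 1 1 4}),
   (5, {a3 0 1 2, a3 0 3 4}, {a3 1 3 3, a3 2 4 4, a3 0 0 0}),
   (5, {a3 0 1 2, a3 0 3 4}, {a3 1 3 3, a3 2 2 4}),
   (5, {a3 0 1 2, a3 0 3 4}, {a3 1 3 3, a3 2 2 2}),
   (5, {a3 0 1 2, a3 0 3 4}, {a3 1 3 3, a3 4 4 4}),
   (5, {a3 0 1 2, a3 0 3 3, a3 0 0 4}, {a3 1 4 4}),
   (5, {a3 0 1 2, a3 0 3 3, a3 0 0 4}, {a3 1 1 3}),
   (5, {a3 0 1 2, a3 0 3 3, a3 0 0 4}, {a3 1 1 1}),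
   (5, {a3 0 1 2, a3 0 3 3, a3 1 4 4}, {a3 0 0 4}),
   (5, {a3 0 1 2, a3 0 3 3, a3 1 4 4}, {a3 2 2 3}),
   (5, {a3 0 1 2, a3 0 3 3, a3 1 4 4}, {a3 2 2 2}),
   (5, {a3 0 1 2, a3 0 3 3, a3 1 1 4}, {a3 2 4 4}),
   (5, {a3 0 1 2, a3 0 3 3, a3 1 1 4}, {a3 2 2 3}),
   (5, {a3 0 1 2, a3 0 3 3, a3 1 1 4}, {a3 2 2 2}),
   (5, {a3 0 1 2, a3 0 3 3, a3 3 4 4}, {a3 1 1 4}),
   (5, {a3 0 1 2, a3 0 3 3, a3 3 4 4}, {a3 1 1 1}),
   (5, {a3 0 1 2, a3 0 3 3, a3 4 4 4}, {a3 1 1 3}),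
   (5, {a3 0 1 2, a3 0 0 3, a3 1 1 4}, {a3 0 4 4}),
   (5, {a3 0 1 2, a3 0 0 3, a3 1 1 4}, {a3 2 3 3}),
   (5, {a3 0 1 2, a3 0 0 3, a3 1 1 4}, {a3 2 2 2}),
   (5, {a3 0 1 2, a3 0 0 3, a3 3 3 4}, {a3 1 1 4}),
   (5, {a3 0 1 2, a3 0 0 3, a3 3 3 4}, {a3 1 1 1}),
   (5, {a3 0 1 2, a3 0 0 3, a3 4 4 4}, {a3 1 3 3}),
   (5, {a3 0 1 2, a3 3 4 4}, {a3 0 0 0}),
   (5, {a3 0 1 1, a3 2 3 3, a3 0 0 4}, {a3 1 2 2}),
   (5, {a3 0 1 1, a3 2 3 3, a3 0 0 4}, {a3 3 4 4}),
   (5, {a3 0 1 1, a3 2 3 3, a3 4 4 4}, {a3 0 0 3})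
  ]"

end

theory Submission
  imports Defs
begin

text \<open>Let \<open>x\<^sub>0 < \<dots> < x\<^bsub>k-1\<^esub>\<close> be the distinct angle values at degree 3 vertices. Every angle
  combination there is a sorted triple of indices whose values sum to \<open>2\<pi>\<close>; since the \<open>x\<^sub>i\<close>
  increase strictly, raising an index raises the sum, so two distinct combinations are
  incomparable componentwise. Hence the combinations form an antichain of sorted triples over
  \<open>{0..<k}\<close> in which every index occurs. For \<open>k \<le> 5\<close> these antichains are enumerated
  exhaustively, and each is matched, after a permutation of the letters, with a row of the
  table.\<close>

lemma sorted_size3_mset:
  fixes N :: "'a :: linorder multiset"
  assumes "size N = 3"
  obtains a b c where "a \<le> b" "b \<le> c" "N = {#a, b, c#}"
proof -
  have "length (sorted_list_of_multiset N) = 3"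
    using assms by (metis mset_sorted_list_of_multiset size_mset)
  then obtain a b c where "sorted_list_of_multiset N = [a, b, c]"
    by (auto simp: numeral_eq_Suc length_Suc_conv)
  then show thesis
    using that sorted_sorted_list_of_multiset[of N] mset_sorted_list_of_multiset[of N]
    by (auto simp: add_mset_commute)
qed

lemma increasing_enumeration:
  fixes V :: "'a :: linorder set"
  assumes "finite V"
  obtains x where "bij_betw x {..<card V} V" and "\<And>i j. i < j \<Longrightarrow> j < card V \<Longrightarrow> x i < x j"
proof
  let ?xs = "sorted_list_of_set V"
  show "bij_betw ((!) ?xs) {..<card V} V"
    by (rule bij_betw_nth) (simp_all add: assms)
  show "?xs ! i < ?xs ! j" if "i < j" "j < card V" for i j
    using sorted_wrt_nth_less[OF strict_sorted_list_of_set that(1)] that by simp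
qed

type_synonym triple = "nat \<times> nat \<times> nat"

fun triple_mset :: "triple \<Rightarrow> nat multiset" where
  "triple_mset (a, b, c) = {#a, b, c#}"

definition sorted_triples :: "nat \<Rightarrow> triple list" where
  "sorted_triples k =
     filter (\<lambda>(a, b, c). a \<le> b \<and> b \<le> c) (List.product [0..<k] (List.product [0..<k] [0..<k]))"

lemma mem_sorted_triples:
  "(a, b, c) \<in> set (sorted_triples k) \<longleftrightarrow> a \<le> b \<and> b \<le> c \<and> c < k"
  by (auto simp: sorted_triples_def)

lemma distinct_sorted_triples: "distinct (sorted_triples k)"
  by (simp add: sorted_triples_def distinct_product)

lemma sorted_triples_bound:
  "t \<in> set (sorted_triples k) \<Longrightarrow> j \<in># triple_mset t \<Longrightarrow> j < k"
  by (cases t) (auto simp: mem_sorted_triples)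

fun triple_le :: "triple \<Rightarrow> triple \<Rightarrow> bool" where
  "triple_le (a, b, c) (a', b', c') \<longleftrightarrow> a \<le> a' \<and> b \<le> b' \<and> c \<le> c'"

definition incomparable :: "triple \<Rightarrow> triple \<Rightarrow> bool" where
  "incomparable s t \<longleftrightarrow> \<not> triple_le s t \<and> \<not> triple_le t s"

lemma sum_triple_strict_mono:
  fixes x :: "nat \<Rightarrow> 'a :: ordered_cancel_comm_monoid_add"
  assumes mono: "\<And>i j. i < j \<Longrightarrow> j < k \<Longrightarrow> x i < x j"
    and le: "triple_le s t" and "s \<noteq> t" and t_range: "t \<in> set (sorted_triples k)"
  shows "sum_mset (image_mset x (triple_mset s)) < sum_mset (image_mset x (triple_mset t))"
proof -
  obtain a b c a' b' c' where s: "s = (a, b, c)" and t: "t = (a', b', c')"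
    by (cases s, cases t) auto
  have "x a \<le> x a'" "x b \<le> x b'" "x c \<le> x c'"
    using le t_range mono[of a a'] mono[of b b'] mono[of c c']
    by (fastforce simp: s t mem_sorted_triples)+
  moreover have "x a < x a' \<or> x b < x b' \<or> x c < x c'"
    using le t_range \<open>s \<noteq> t\<close> mono[of a a'] mono[of b b'] mono[of c c']
    by (auto simp: s t mem_sorted_triples)
  ultimately show ?thesis
    by (auto simp: s t add.assoc intro: add_less_le_mono add_le_less_mono add_mono)
qed

lemma equal_sum_sorted_triples_incomparable:
  fixes x :: "nat \<Rightarrow> 'a :: ordered_cancel_comm_monoid_add"
  assumes mono: "\<And>i j. i < j \<Longrightarrow> j < k \<Longrightarrow> x i < x j"
    and range: "s \<in> set (sorted_triples k)" "t \<in> set (sorted_triples k)" and "s \<noteq> t"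
    and sum: "sum_mset (image_mset x (triple_mset s)) = sum_mset (image_mset x (triple_mset t))"
  shows "incomparable s t"
proof -
  have "\<not> triple_le s t"
    using sum_triple_strict_mono[where x = x, OF mono _ \<open>s \<noteq> t\<close> range(2)] sum by auto
  moreover have "\<not> triple_le t s"
    using sum_triple_strict_mono[where x = x, OF mono _ \<open>s \<noteq> t\<close>[symmetric] range(1)] sum by auto
  ultimately show ?thesis
    by (simp add: incomparable_def)
qed

lemma obtain_sorted_triple:
  assumes "size M = 3" and "set_mset M \<subseteq> x ` {..<k}"
  obtains t where "t \<in> set (sorted_triples k)" and "M = image_mset x (triple_mset t)"
proof -
  let ?N = "image_mset (inv_into {..<k} x) M"
  have M: "M = image_mset x ?N"
    using assms(2)
    by (auto simp: multiset.map_comp f_inv_into_f intro!: multiset.map_ident_strong[symmetric])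
  have "set_mset ?N \<subseteq> {..<k}"
    using assms(2) by (auto intro: inv_into_into[of _ x "{..<k}", simplified])
  moreover obtain a b c where "a \<le> b" "b \<le> c" "?N = {#a, b, c#}"
    using sorted_size3_mset[of ?N] assms(1) by auto
  ultimately show thesis
    using that[of "(a, b, c)"] M by (simp add: mem_sorted_triples)
qed

definition covers_letters :: "nat \<Rightarrow> triple list \<Rightarrow> bool" where
  "covers_letters k L \<longleftrightarrow> (\<forall>i \<in> set [0..<k]. \<exists>t \<in> set L. i \<in># triple_mset t)"

fun antichains :: "nat \<Rightarrow> triple list \<Rightarrow> triple list \<Rightarrow> triple list list" where
  "antichains k [] L = (if covers_letters k L then [L] else [])"
| "antichains k (t # ts) L = antichains k ts L @ antichains k (filter (incomparable t) ts) (t # L)"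

definition certifies :: "nat \<Rightarrow> triple list \<Rightarrow> nat \<times> nat list \<Rightarrow> bool" where
  "certifies k L = (\<lambda>(r, q). r < length rows \<and>
     (case rows ! r of (k', N, Opt) \<Rightarrow> k' = k \<and> distinct q \<and> set q = set [0..<k] \<and>
        (\<forall>n \<in> N. \<exists>t \<in> set L. image_mset ((!) q) n = triple_mset t) \<and>
        (\<forall>t \<in> set L. \<exists>n \<in> N \<union> Opt. image_mset ((!) q) n = triple_mset t)))"

definition verified_classification :: "nat \<Rightarrow> (nat \<times> nat list) list \<Rightarrow> bool" where
  "verified_classification k C \<longleftrightarrow> list_all2 (certifies k) (antichains k (sorted_triples k) []) C"

lemma antichains_complete:
  assumes "distinct ts" and "A \<subseteq> set ts"
    and "\<forall>s \<in> A. \<forall>t \<in> A. s \<noteq> t \<longrightarrow> incomparable s t"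
    and "covers_letters k (rev (filter (\<lambda>t. t \<in> A) ts) @ L)"
  shows "rev (filter (\<lambda>t. t \<in> A) ts) @ L \<in> set (antichains k ts L)"
  using assms
proof (induction k ts L arbitrary: A rule: antichains.induct)
  case (1 k L)
  then show ?case by simp
next
  case (2 k t ts L)
  show ?case
  proof (cases "t \<in> A")
    case True
    have "filter (\<lambda>s. s \<in> A - {t}) (filter (incomparable t) ts) = filter (\<lambda>s. s \<in> A) ts"
      using "2.prems"(1,3) True by (auto simp: filter_filter intro!: filter_cong)
    moreover have "A - {t} \<subseteq> set (filter (incomparable t) ts)"
      using "2.prems"(2,3) True by auto
    ultimately show ?thesis
      using "2.IH"(2)[of "A - {t}"] "2.prems" True by auto
  next
    case False
    then show ?thesis
      using "2.IH"(1)[of A] "2.prems" by auto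
  qed
qed

lemma certified_row:
  assumes cert: "certifies k L (r, q)"
    and x: "bij_betw x {..<k} V"
    and S: "S = (\<lambda>t. image_mset x (triple_mset t)) ` set L"
  shows "\<exists>(k', N, Opt) \<in> set rows. k' = k \<and>
           (\<exists>f. bij_betw f {..<k'} V \<and> image_mset f ` N \<subseteq> S \<and> S \<subseteq> image_mset f ` (N \<union> Opt))"
proof -
  obtain k' N Opt where row: "rows ! r = (k', N, Opt)"
    by (cases "rows ! r") auto
  have "r < length rows" and "k' = k" and "distinct q" and q: "set q = {..<k}"
    and N: "\<forall>n \<in> N. \<exists>t \<in> set L. image_mset ((!) q) n = triple_mset t"
    and L: "\<forall>t \<in> set L. \<exists>n \<in> N \<union> Opt. image_mset ((!) q) n = triple_mset t"
    using cert row by (auto simp: certifies_def atLeast0LessThan)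
  have "length q = k"
    using distinct_card[OF \<open>distinct q\<close>] q by simp
  then have "bij_betw ((!) q) {..<k} {..<k}"
    using bij_betw_nth[OF \<open>distinct q\<close>] q by simp
  have via_q: "image_mset (x \<circ> (!) q) n = image_mset x (triple_mset t)"
    if "image_mset ((!) q) n = triple_mset t" for n t
    using that by (simp flip: multiset.map_comp)
  have "bij_betw (x \<circ> (!) q) {..<k} V"
    using bij_betw_trans[OF \<open>bij_betw ((!) q) {..<k} {..<k}\<close> x] .
  moreover have "image_mset (x \<circ> (!) q) ` N \<subseteq> S"
  proof
    fix M assume "M \<in> image_mset (x \<circ> (!) q) ` N"
    then obtain n t where "M = image_mset (x \<circ> (!) q) n" "t \<in> set L"
      "image_mset ((!) q) n = triple_mset t"
      using N by blast
    then show "M \<in> S"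
      using S via_q by auto
  qed
  moreover have "S \<subseteq> image_mset (x \<circ> (!) q) ` (N \<union> Opt)"
  proof
    fix M assume "M \<in> S"
    then obtain t n where "M = image_mset x (triple_mset t)" "n \<in> N \<union> Opt"
      "image_mset ((!) q) n = triple_mset t"
      using L S by blast
    then show "M \<in> image_mset (x \<circ> (!) q) ` (N \<union> Opt)"
      by (metis via_q image_eqI)
  qed
  moreover have "(k', N, Opt) \<in> set rows"
    using \<open>r < length rows\<close> row by (metis nth_mem)
  ultimately show ?thesis
    using \<open>k' = k\<close> by (intro bexI[of _ "(k', N, Opt)"]) auto
qed

text \<open>For each antichain, in the order of enumeration: the index of the matching row of
  \<open>rows\<close> and the list \<open>q\<close> sending each letter of that row to an index of the antichain.\<close>

definition certificate1 :: "(nat \<times> nat list) list" where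
  "certificate1 = [
    (0, [0])]"

definition certificate2 :: "(nat \<times> nat list) list" where
  "certificate2 = [
    (1, [0,1]), (1, [1,0])]"

definition certificate3 :: "(nat \<times> nat list) list" where
  "certificate3 = [
    (3, [2,1,0]), (4, [0,2,1]), (2, [0,1,2]), (2, [1,0,2]), (4, [2,0,1]), (3, [0,1,2])]"

definition certificate4 :: "(nat \<times> nat list) list" where
  "certificate4 = [
    (7, [3,1,2,0]), (8, [3,2,1,0]), (10, [0,3,1,2]), (11, [3,1,0,2]), (10, [1,2,0,3]), (10, [0,3,2,1]),
    (7, [2,0,3,1]), (5, [3,0,2,1]), (6, [3,2,0,1]), (5, [3,2,0,1]), (5, [2,0,3,1]), (9, [0,2,3,1]),
    (10, [0,2,3,1]), (9, [0,1,3,2]), (5, [1,0,3,2]), (7, [1,0,3,2]), (5, [0,1,3,2]), (5, [0,1,3,2]),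
    (6, [0,1,3,2]), (10, [1,2,3,0]), (10, [2,1,3,0]), (10, [2,1,3,0]), (11, [0,2,3,1]), (7, [0,1,2,3]),
    (8, [0,1,2,3])]"

definition certificate5 :: "(nat \<times> nat list) list" where
  "certificate5 = [
    (29, [3,4,1,2,0]), (17, [4,1,3,2,0]), (19, [4,3,1,2,0]), (18, [4,3,1,2,0]), (23, [3,4,1,2,0]), (34, [4,1,3,0,2]),
    (36, [4,2,1,3,0]), (36, [3,2,0,4,1]), (38, [0,4,1,3,2]), (34, [4,1,2,0,3]), (23, [2,4,1,3,0]), (29, [2,4,1,3,0]),
    (23, [1,4,2,3,0]), (24, [1,4,2,3,0]), (25, [1,4,2,3,0]), (35, [1,2,3,0,4]), (35, [2,1,3,0,4]), (36, [4,1,2,3,0]),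
    (36, [4,1,3,2,0]), (36, [4,1,3,2,0]), (38, [1,3,0,4,2]), (32, [1,2,3,4,0]), (33, [1,2,3,4,0]), (38, [0,4,3,1,2]),
    (36, [1,2,0,4,3]), (23, [4,3,0,2,1]), (17, [3,0,4,2,1]), (34, [3,0,4,1,2]), (12, [4,0,3,1,2]), (15, [4,0,3,1,2]),
    (12, [4,2,1,3,0]), (12, [4,2,1,0,3]), (15, [4,1,2,0,3]), (12, [4,1,2,3,0]), (12, [4,3,0,2,1]), (15, [4,1,2,3,0]),
    (12, [3,0,4,1,2]), (15, [3,1,2,0,4]), (35, [0,3,4,1,2]), (23, [4,3,0,1,2]), (20, [3,4,0,2,1]), (28, [4,0,3,1,2]),
    (17, [3,4,0,2,1]), (28, [4,3,0,1,2]), (12, [3,1,2,0,4]), (16, [3,4,0,1,2]), (26, [4,0,3,1,2]), (28, [3,0,4,1,2]),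
    (26, [3,0,4,1,2]), (35, [0,3,4,2,1]), (35, [1,2,4,0,3]), (32, [2,1,4,3,0]), (35, [2,1,4,0,3]), (36, [3,2,4,1,0]),
    (38, [0,3,4,1,2]), (29, [1,3,2,4,0]), (31, [1,3,2,4,0]), (36, [1,2,0,3,4]), (35, [0,2,4,1,3]), (32, [2,0,4,3,1]),
    (35, [2,0,4,1,3]), (12, [2,0,4,1,3]), (13, [2,0,4,1,3]), (28, [4,0,2,1,3]), (20, [2,4,0,3,1]), (23, [4,2,0,1,3]),
    (26, [4,0,2,1,3]), (26, [4,2,0,1,3]), (27, [4,2,0,1,3]), (12, [2,1,3,0,4]), (13, [2,0,4,3,1]), (35, [0,2,4,3,1]),
    (35, [2,0,4,3,1]), (32, [2,0,4,1,3]), (12, [2,0,4,3,1]), (13, [2,0,4,3,1]), (23, [0,2,4,3,1]), (20, [0,4,2,3,1]),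
    (21, [0,4,2,3,1]), (22, [0,4,2,3,1]), (13, [2,0,4,3,1]), (13, [2,0,4,3,1]), (21, [4,0,2,1,3]), (26, [0,2,4,3,1]),
    (27, [0,2,4,3,1]), (26, [0,2,4,3,1]), (20, [0,2,4,3,1]), (28, [0,2,4,3,1]), (35, [0,2,3,4,1]), (35, [2,0,3,4,1]),
    (32, [2,0,3,1,4]), (35, [0,1,4,2,3]), (35, [0,1,4,3,2]), (26, [1,0,4,3,2]), (28, [1,0,4,3,2]), (12, [1,0,4,2,3]),
    (15, [1,3,2,0,4]), (34, [1,0,4,3,2]), (17, [1,0,4,2,3]), (26, [0,1,4,3,2]), (28, [0,1,4,3,2]), (12, [1,0,4,3,2]),
    (16, [1,0,4,3,2]), (20, [0,1,4,3,2]), (28, [0,1,4,3,2]), (17, [1,0,4,2,3]), (23, [0,1,4,3,2]), (12, [0,1,4,2,3]),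
    (15, [0,3,2,1,4]), (12, [0,1,4,2,3]), (12, [0,1,4,2,3]), (15, [0,3,2,1,4]), (12, [0,1,4,2,3]), (12, [0,1,4,3,2]),
    (15, [0,4,1,2,3]), (23, [0,1,4,2,3]), (36, [3,2,4,0,1]), (38, [1,3,4,0,2]), (35, [1,2,3,4,0]), (35, [2,1,3,4,0]),
    (38, [3,1,4,0,2]), (36, [1,2,4,0,3]), (32, [3,1,2,0,4]), (33, [3,2,1,0,4]), (36, [0,3,1,2,4]), (38, [3,1,4,0,2]),
    (36, [0,3,1,2,4]), (36, [0,3,2,1,4]), (29, [0,2,3,4,1]), (23, [3,0,2,1,4]), (25, [3,0,2,1,4]), (24, [3,0,2,1,4]),
    (23, [2,0,3,1,4]), (34, [0,2,3,4,1]), (36, [0,2,3,1,4]), (34, [0,1,3,4,2]), (23, [1,0,3,2,4]), (29, [0,1,3,4,2]),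
    (17, [0,1,3,2,4]), (18, [0,1,3,2,4]), (19, [0,1,3,2,4])]"

lemma verified_classification_upto_5:
  assumes "1 \<le> k" and "k \<le> 5"
  obtains C where "verified_classification k C"
proof -
  have "verified_classification 1 certificate1" by code_simp
  moreover have "verified_classification 2 certificate2" by code_simp
  moreover have "verified_classification 3 certificate3" by code_simp
  moreover have "verified_classification 4 certificate4" by code_simp
  moreover have "verified_classification 5 certificate5" by code_simp
  moreover consider "k = 1" | "k = 2" | "k = 3" | "k = 4" | "k = 5"
    using assms by linarith
  ultimately show thesis
    using that by metis
qed

lemma classify_constant_sum_triples:
  fixes S :: "'a :: {linorder, ordered_cancel_comm_monoid_add} multiset set"
  assumes C: "verified_classification k C"
    and V: "finite V" "card V = k" "V = (\<Union>M \<in> S. set_mset M)"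
    and S: "\<And>M. M \<in> S \<Longrightarrow> size M = 3 \<and> sum_mset M = \<sigma>"
  shows "\<exists>(k', N, Opt) \<in> set rows. k' = k \<and>
           (\<exists>f. bij_betw f {..<k'} V \<and> image_mset f ` N \<subseteq> S \<and> S \<subseteq> image_mset f ` (N \<union> Opt))"
proof -
  obtain x where x: "bij_betw x {..<k} V"
    and mono: "\<And>i j. i < j \<Longrightarrow> j < k \<Longrightarrow> x i < x j"
    using increasing_enumeration[OF V(1)] V(2) by blast
  define A where "A = {t \<in> set (sorted_triples k). image_mset x (triple_mset t) \<in> S}"
  define L where "L = rev (filter (\<lambda>t. t \<in> A) (sorted_triples k))"
  have set_L: "set L = A"
    by (auto simp: L_def A_def)
  have S_eq: "S = (\<lambda>t. image_mset x (triple_mset t)) ` A"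
  proof
    show "S \<subseteq> (\<lambda>t. image_mset x (triple_mset t)) ` A"
    proof
      fix M assume "M \<in> S"
      moreover have "set_mset M \<subseteq> x ` {..<k}"
        using \<open>M \<in> S\<close> V(3) bij_betw_imp_surj_on[OF x] by auto
      ultimately obtain t where "t \<in> set (sorted_triples k)" "M = image_mset x (triple_mset t)"
        using S obtain_sorted_triple[of M x k] by blast
      then show "M \<in> (\<lambda>t. image_mset x (triple_mset t)) ` A"
        using \<open>M \<in> S\<close> by (auto simp: A_def)
    qed
  qed (auto simp: A_def)
  have "incomparable s t" if "s \<in> A" "t \<in> A" "s \<noteq> t" for s t
    using that S
    by (intro equal_sum_sorted_triples_incomparable[where x = x, OF mono]) (auto simp: A_def)
  moreover have "covers_letters k L"
    unfolding covers_letters_def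
  proof
    fix i assume "i \<in> set [0..<k]"
    then have "x i \<in> V"
      using bij_betw_apply[OF x] by auto
    then obtain t j where t: "t \<in> A" "j \<in># triple_mset t" "x i = x j"
      using V(3) S_eq by auto
    then have "j < k"
      by (auto simp: A_def intro: sorted_triples_bound)
    then have "i = j"
      using t(3) \<open>i \<in> set [0..<k]\<close> bij_betw_imp_inj_on[OF x] by (auto dest: inj_onD)
    then show "\<exists>t \<in> set L. i \<in># triple_mset t"
      using t set_L by auto
  qed
  ultimately have "L \<in> set (antichains k (sorted_triples k) [])"
    using antichains_complete[OF distinct_sorted_triples, where A = A and L = "[]"]
    by (simp add: L_def A_def)
  then obtain i where "i < length C" and "certifies k L (C ! i)"
    using C by (auto simp: verified_classification_def list_all2_conv_all_nth in_set_conv_nth)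
  moreover obtain r q where "C ! i = (r, q)"
    by fastforce
  ultimately show ?thesis
    using certified_row[OF _ x, of L r q S] S_eq set_L by simp
qed

lemma deg3_combo_size_sum:
  assumes fin: "\<forall>v \<in> range vert. finite (corners_at vert v)"
    and vsum: "\<forall>v \<in> range vert. (\<Sum>c \<in> corners_at vert v. ang c) = \<sigma>"
    and "M \<in> deg3_combos vert ang"
  shows "size M = 3 \<and> sum_mset M = \<sigma>"
proof -
  obtain v where v: "v \<in> range vert" "degree vert v = 3" "M = angle_comb vert ang v"
    using assms(3) by (auto simp: deg3_combos_def)
  then show ?thesis
    using fin vsum by (auto simp: degree_def angle_comb_def sum_unfold_sum_mset)
qed

theorem theorem1:
  fixes vert :: "'c \<Rightarrow> 'v" and ang :: "'c \<Rightarrow> real"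
  assumes fin: "\<forall>v \<in> range vert. finite (corners_at vert v)"
    and pos: "\<forall>c. ang c > 0"
    and vsum: "\<forall>v \<in> range vert. (\<Sum>c \<in> corners_at vert v. ang c) = 2 * pi"
    and k_lo: "1 \<le> card (deg3_values vert ang)"
    and k_hi: "card (deg3_values vert ang) \<le> 5"
  shows "\<exists>(k, N, Opt) \<in> set rows.
           k = card (deg3_values vert ang) \<and>
           (\<exists>f :: nat \<Rightarrow> real. bij_betw f {..<k} (deg3_values vert ang) \<and>
              image_mset f ` N \<subseteq> deg3_combos vert ang \<and>
              deg3_combos vert ang \<subseteq> image_mset f ` (N \<union> Opt))"
proof -
  obtain C where C: "verified_classification (card (deg3_values vert ang)) C"
    using verified_classification_upto_5[OF k_lo k_hi] .
  show ?thesis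
  proof (rule classify_constant_sum_triples[OF C])
    show "finite (deg3_values vert ang)"
      using k_lo card.infinite by force
    show "deg3_values vert ang = (\<Union>M \<in> deg3_combos vert ang. set_mset M)"
      by (simp add: deg3_values_def)
    show "size M = 3 \<and> sum_mset M = 2 * pi" if "M \<in> deg3_combos vert ang" for M
      using deg3_combo_size_sum[OF fin vsum that] .
  qed simp
qed

end
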